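(* Let $f_0$ be a positive integer. There exists a toric line arrangement in $\mathbb{T}^2$ consisting of exactly $3$ lines with $f_0$ vertices and $f_2=f_0$ chambers if and only if $f_0\ge 2$.
   Context: Let $\mathbb{T}^2=\mathbb{R}^2/\mathbb{Z}^2$ with quotient map $\pi:\mathbb{R}^2\to\mathbb{T}^2$. A toric line is the image $\pi(L)$ of a line $L=\{(x,y)\in\mathbb{R}^2: ax+by=c\}$ with $a,b\in\mathbb{Z}$ coprime and $c\in\mathbb{R}$; it is said to be of type $(a,b)$. A toric line arrangement is a finite set $\mathcal{A}=\{l_1,\dots,l_n\}$ of distinct toric lines which is essential, i.e. not all of its lines are of the same type (not all lines are parallel). The vertices of $\mathcal{A}$ are the points of $\mathbb{T}^2$ lying on at least two lines of $\mathcal{A}$; the chambers are the connected components of $\mathbb{T}^2\setminus\bigcup_i l_i$. We write $f_0$ and $f_2$ for the numbers of vertices and chambers. *)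

theory Defs
  imports "HOL-Analysis.Analysis"
begin

text \<open>The torus R^2/Z^2 is realised as its standard homeomorphic image in C x C,
  via the map (x,y) to (cis(2 pi x), cis(2 pi y)), which induces a homeomorphism
  from R^2/Z^2 onto its image.\<close>

definition torus_map :: "real \<times> real \<Rightarrow> complex \<times> complex" where
  "torus_map p = (cis (2 * pi * fst p), cis (2 * pi * snd p))"

definition torus :: "(complex \<times> complex) set" where
  "torus = range torus_map"

definition toric_line :: "int \<Rightarrow> int \<Rightarrow> real \<Rightarrow> (complex \<times> complex) set" where
  "toric_line a b c = torus_map ` {p. of_int a * fst p + of_int b * snd p = c}"

definition is_toric_line :: "(complex \<times> complex) set \<Rightarrow> bool" where
  "is_toric_line L \<longleftrightarrow> (\<exists>a b c. coprime a b \<and> L = toric_line a b c)"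

definition toric_arrangement :: "(complex \<times> complex) set set \<Rightarrow> bool" where
  "toric_arrangement A \<longleftrightarrow> finite A \<and> (\<forall>L\<in>A. is_toric_line L) \<and>
     (\<exists>a1 b1 c1 a2 b2 c2. coprime a1 b1 \<and> coprime a2 b2 \<and>
        toric_line a1 b1 c1 \<in> A \<and> toric_line a2 b2 c2 \<in> A \<and> a1 * b2 \<noteq> a2 * b1)"

definition arr_vertices :: "(complex \<times> complex) set set \<Rightarrow> (complex \<times> complex) set" where
  "arr_vertices A = {p \<in> torus. \<exists>L1\<in>A. \<exists>L2\<in>A. L1 \<noteq> L2 \<and> p \<in> L1 \<and> p \<in> L2}"

definition arr_chambers :: "(complex \<times> complex) set set \<Rightarrow> (complex \<times> complex) set set" where
  "arr_chambers A = components (torus - \<Union>A)"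

end

theory Submission
  imports Defs
begin

(*
  A line of type (a,b) is the level set {z. z1^a z2^b = cis(2 pi c)} of a character.  Two lines
  of non-parallel types (a1,b1), (a2,b2) meet in |a1 b2 - a2 b1| points; we only need that they
  meet at all, and in at least two points unless the determinant is +-1.

  Necessity: with a single vertex v, the essential pair forces all three lines through v with
  pairwise unimodular types, so the third type is +-(first) +-(second).  Normalising the characters
  at v, the sum G = m turns(beta1) + n turns(beta2) of the lifted angles satisfies
  cis(2 pi G) = beta3, so G avoids the integers on the complement while taking values whose
  integer parts differ; hence the complement is disconnected and has at least two chambers.

  Sufficiency: the staircase arrangement y = 0, x = 0, x + k y = 1/2 has the k + 2 vertices
  (1,1), (-1,1), (1,zeta) with zeta^k = -1, and its chambers are the level sets of the integer part
  of the height x + k y + 1/2 on the open unit square; a general lemma counts components of a set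
  by the integer values of a continuous, nowhere-integral function with connected level sets.
*)

lemma cis_2pi_eq_iff: "cis (2*pi*x) = cis (2*pi*y) \<longleftrightarrow> x - y \<in> \<int>"
proof -
  have "cis (2*pi*x) = cis (2*pi*y) \<longleftrightarrow> cis (2*pi*x) / cis (2*pi*y) = 1"
    by simp
  also have "\<dots> \<longleftrightarrow> exp (\<i> * of_real (2*pi*(x - y))) = 1"
    by (subst cis_divide) (simp add: cis_conv_exp right_diff_distrib)
  also have "\<dots> \<longleftrightarrow> (\<exists>n::int. 2*pi*(x - y) = of_int (2*n) * pi)"
    by (simp add: exp_eq_1)
  also have "\<dots> \<longleftrightarrow> (\<exists>n::int. x - y = of_int n)"
    by simp
  also have "\<dots> \<longleftrightarrow> x - y \<in> \<int>"
    by (metis Ints_cases Ints_of_int)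
  finally show ?thesis .
qed

lemma cis_2pi_ne_1: "0 < x \<Longrightarrow> x < 1 \<Longrightarrow> cis (2*pi*x) \<noteq> 1"
  using cis_2pi_eq_iff[of x 0] by (auto elim!: Ints_cases)

lemma cis_lin_comb:
  "cis (2*pi*(of_int a * x + of_int b * y)) = cis (2*pi*x) powi a * cis (2*pi*y) powi b"
  by (simp add: cis_power_int cis_mult algebra_simps)

lemma cis_Arg_unit: "cmod w = 1 \<Longrightarrow> cis (Arg w) = w"
  by (metis rcis_cmod_Arg cis_rcis_eq)

lemma torus_iff: "z \<in> torus \<longleftrightarrow> cmod (fst z) = 1 \<and> cmod (snd z) = 1"
proof
  assume "z \<in> torus"
  thus "cmod (fst z) = 1 \<and> cmod (snd z) = 1"
    by (auto simp: torus_def torus_map_def)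
next
  assume "cmod (fst z) = 1 \<and> cmod (snd z) = 1"
  hence "torus_map (Arg (fst z)/(2*pi), Arg (snd z)/(2*pi)) = z"
    by (simp add: torus_map_def cis_Arg_unit)
  thus "z \<in> torus"
    unfolding torus_def by (metis rangeI)
qed

lemma torus_map_in_torus: "torus_map p \<in> torus"
  by (simp add: torus_def)

lemma torus_map_eq_iff:
  "torus_map p = torus_map q \<longleftrightarrow> fst p - fst q \<in> \<int> \<and> snd p - snd q \<in> \<int>"
  by (simp add: torus_map_def cis_2pi_eq_iff)

lemma continuous_on_torus_map: "continuous_on S torus_map"
  unfolding torus_map_def[abs_def] by (intro continuous_intros)

definition character :: "int \<Rightarrow> int \<Rightarrow> complex \<times> complex \<Rightarrow> complex" where
  "character a b z = fst z powi a * snd z powi b"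

lemma character_torus_map:
  "character a b (torus_map p) = cis (2*pi*(of_int a * fst p + of_int b * snd p))"
  by (simp add: character_def torus_map_def cis_lin_comb)

(* For primitive (a,b) the line a x + b y = c is exactly a level set of the character; the
   converse inclusion needs Bezout to move a lattice translate onto the line. *)
lemma toric_line_level_set:
  assumes "coprime a b"
  shows "toric_line a b c = {z\<in>torus. character a b z = cis (2*pi*c)}"
proof safe
  fix z assume "z \<in> toric_line a b c"
  then obtain p where "z = torus_map p" "of_int a * fst p + of_int b * snd p = c"
    by (auto simp: toric_line_def)
  thus "z \<in> torus" "character a b z = cis (2*pi*c)"
    by (simp_all add: torus_map_in_torus character_torus_map)
next
  fix z assume z: "z \<in> torus" "character a b z = cis (2*pi*c)"
  then obtain q where q: "z = torus_map q"
    by (auto simp: torus_def)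
  have "(of_int a * fst q + of_int b * snd q) - c \<in> \<int>"
    using z q by (simp add: character_torus_map cis_2pi_eq_iff)
  then obtain k :: int where k: "of_int a * fst q + of_int b * snd q - c = k"
    by (metis Ints_cases)
  obtain u w :: int where uw: "u * a + w * b = 1"
    using bezout_int[of a b] assms by auto
  \<comment> \<open>shifting q by the lattice vector k(u,w) moves it onto the line itself\<close>
  define p where "p = (fst q - of_int (k*u), snd q - of_int (k*w))"
  have "of_int a * fst p + of_int b * snd p = c - of_int k * (of_int (u*a + w*b) - 1)"
    using k unfolding p_def by (simp add: algebra_simps)
  hence "of_int a * fst p + of_int b * snd p = c"
    using uw by simp
  moreover have "torus_map p = z"
    unfolding q torus_map_eq_iff p_def by simp
  ultimately show "z \<in> toric_line a b c"
    unfolding toric_line_def by blast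
qed

lemma toric_line_subset_torus: "toric_line a b c \<subseteq> torus"
  by (auto simp: toric_line_def torus_map_in_torus)

lemma norm_character: "z \<in> torus \<Longrightarrow> cmod (character a b z) = 1"
  by (simp add: character_def norm_mult norm_power_int torus_iff)

lemma character_uminus: "z \<in> torus \<Longrightarrow> character (-a) (-b) z = inverse (character a b z)"
  by (simp add: character_def power_int_minus)

lemma character_lin_comb:
  assumes "z \<in> torus"
  shows "character (m*a1 + n*a2) (m*b1 + n*b2) z = character a1 b1 z powi m * character a2 b2 z powi n"
proof -
  have "fst z \<noteq> 0" "snd z \<noteq> 0"
    using assms by (auto simp: torus_iff)
  thus ?thesis
    by (simp add: character_def power_int_add power_int_mult_distrib power_int_mult
                  mult.commute mult.left_commute)
qed

lemma continuous_on_character: "continuous_on torus (character a b)"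
  unfolding character_def[abs_def]
  by (intro continuous_on_mult continuous_on_power_int) 
     (auto intro: continuous_intros simp: torus_iff)

lemma cramer_2x2:
  fixes a1 b1 a2 b2 r1 r2 :: "'a::field"
  assumes "a1*b2 - a2*b1 \<noteq> 0"
  defines "x \<equiv> (r1*b2 - r2*b1) / (a1*b2 - a2*b1)" and "y \<equiv> (a1*r2 - a2*r1) / (a1*b2 - a2*b1)"
  shows "a1*x + b1*y = r1" "a2*x + b2*y = r2"
proof -
  define D where "D = a1*b2 - a2*b1"
  have xD: "x * D = r1*b2 - r2*b1" and yD: "y * D = a1*r2 - a2*r1"
    using assms(1) by (simp_all add: x_def y_def D_def)
  have "(a1*x + b1*y) * D = a1*(x*D) + b1*(y*D)"
    by (simp add: algebra_simps)
  also have "\<dots> = r1 * D"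
    unfolding xD yD by (simp add: D_def algebra_simps)
  finally have 1: "(a1*x + b1*y) * D = r1 * D" .
  have "(a2*x + b2*y) * D = a2*(x*D) + b2*(y*D)"
    by (simp add: algebra_simps)
  also have "\<dots> = r2 * D"
    unfolding xD yD by (simp add: D_def algebra_simps)
  finally have 2: "(a2*x + b2*y) * D = r2 * D" .
  from 1 2 show "a1*x + b1*y = r1" "a2*x + b2*y = r2"
    using assms(1) by (simp_all add: D_def)
qed

lemma character_values_attained:
  assumes "a1*b2 - a2*b1 \<noteq> 0"
  shows "\<exists>z\<in>torus. character a1 b1 z = cis (2*pi*r1) \<and> character a2 b2 z = cis (2*pi*r2)"
proof -
  have "real_of_int a1 * of_int b2 - of_int a2 * of_int b1 \<noteq> 0"
    using assms by (metis of_int_eq_iff of_int_mult right_minus_eq)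
  from cramer_2x2[OF this] obtain p :: "real \<times> real" where
    "of_int a1 * fst p + of_int b1 * snd p = r1" "of_int a2 * fst p + of_int b2 * snd p = r2"
    by (metis fst_conv snd_conv)
  thus ?thesis
    by (intro bexI[of _ "torus_map p"]) (simp_all add: character_torus_map torus_map_in_torus)
qed

(* If the determinant is not a unit, two such lines meet in at least two points: the solutions
   for the right-hand sides (r1,r2) and (r1,r2+1) differ by (b1,-a1)/d, which is not integral. *)
lemma character_values_attained_twice:
  assumes "coprime a1 b1" "a1*b2 - a2*b1 \<noteq> 0" "\<bar>a1*b2 - a2*b1\<bar> \<noteq> 1"
  shows "\<exists>z\<in>torus. \<exists>z'\<in>torus. z \<noteq> z' \<and>
           character a1 b1 z = cis (2*pi*r1) \<and> character a2 b2 z = cis (2*pi*r2) \<and>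
           character a1 b1 z' = cis (2*pi*r1) \<and> character a2 b2 z' = cis (2*pi*r2)"
proof -
  define d where "d = a1*b2 - a2*b1"
  have "d \<noteq> 0"
    using assms(2) by (simp add: d_def)
  hence dr: "real_of_int a1 * of_int b2 - of_int a2 * of_int b1 = of_int d" "real_of_int d \<noteq> 0"
    by (simp add: d_def, simp)
  define p where "p = ((r1*b2 - r2*b1) / d, (a1*r2 - a2*r1) / d)"
  define p' where "p' = ((r1*b2 - (r2+1)*b1) / d, (a1*(r2+1) - a2*r1) / d)"
  have D: "real_of_int a1 * of_int b2 - of_int a2 * of_int b1 \<noteq> 0"
    using dr by simp
  have sol: "of_int a1 * fst p + of_int b1 * snd p = r1" "of_int a2 * fst p + of_int b2 * snd p = r2"
            "of_int a1 * fst p' + of_int b1 * snd p' = r1" "of_int a2 * fst p' + of_int b2 * snd p' = r2 + 1"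
    unfolding p_def p'_def fst_conv snd_conv dr(1)[symmetric]
    using cramer_2x2[OF D, of r1 r2] cramer_2x2[OF D, of r1 "r2+1"] by simp_all
  have "torus_map p \<noteq> torus_map p'"
  proof
    assume "torus_map p = torus_map p'"
    moreover have "fst p - fst p' = of_int b1 / of_int d" "snd p - snd p' = - of_int a1 / of_int d"
      unfolding p_def p'_def using dr(2) by (simp_all add: field_simps)
    ultimately obtain k l :: int where "of_int b1 / of_int d = (of_int k :: real)"
        "- of_int a1 / of_int d = (of_int l :: real)"
      by (metis Ints_cases torus_map_eq_iff)
    hence "b1 = k*d" "a1 = -l*d"
      using dr(2) by (simp_all add: field_simps flip: of_int_mult of_int_minus of_int_eq_iff)
    hence "\<bar>d\<bar> = 1"
      using coprime_common_divisor_int[OF assms(1)] by auto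
    thus False
      using assms(3) by (simp add: d_def)
  qed
  moreover have "cis (2*pi*(r2+1)) = cis (2*pi*r2)"
    by (simp add: cis_2pi_eq_iff)
  ultimately show ?thesis
    using sol by (intro bexI[of _ "torus_map p"] bexI[of _ "torus_map p'"])
                 (auto simp: character_torus_map torus_map_in_torus)
qed

lemma nonparallel_lines_differ:
  assumes "coprime a b" "coprime a' b'" "a*b' - a'*b \<noteq> 0"
  shows "toric_line a b c \<noteq> toric_line a' b' c'"
proof
  assume eq: "toric_line a b c = toric_line a' b' c'"
  obtain z where z: "z \<in> torus" "character a b z = cis (2*pi*c)"
      "character a' b' z = cis (2*pi*(c' + 1/2))"
    using character_values_attained[OF assms(3)] by blast
  hence "z \<in> toric_line a b c"
    by (simp add: toric_line_level_set[OF assms(1)])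
  hence "z \<in> toric_line a' b' c'"
    using eq by simp
  hence "cis (2*pi*(c' + 1/2)) = cis (2*pi*c')"
    using z by (simp add: toric_line_level_set[OF assms(2)])
  hence "(1/2 :: real) \<in> \<int>"
    by (simp add: cis_2pi_eq_iff)
  then obtain k :: int where "1/2 = (of_int k :: real)"
    by (rule Ints_cases)
  hence "2*k = 1"
    by (simp flip: of_int_eq_1_iff[where 'a=real])
  thus False
    by presburger
qed

lemma lines_meeting_at_most_once:
  assumes "coprime a b" "coprime a' b'" "a*b' - a'*b \<noteq> 0"
    and "toric_line a b c \<inter> toric_line a' b' c' \<subseteq> {v}"
  shows "v \<in> toric_line a b c" "v \<in> toric_line a' b' c'" "\<bar>a*b' - a'*b\<bar> = 1"
proof -
  have meet: "z \<in> toric_line a b c \<inter> toric_line a' b' c'"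
    if "z \<in> torus" "character a b z = cis (2*pi*c)" "character a' b' z = cis (2*pi*c')" for z
    using that by (simp add: toric_line_level_set[OF assms(1)] toric_line_level_set[OF assms(2)])
  obtain z where "z \<in> toric_line a b c \<inter> toric_line a' b' c'"
    using character_values_attained[OF assms(3)] meet by blast
  moreover from this have "z = v"
    using assms(4) by blast
  ultimately show "v \<in> toric_line a b c" "v \<in> toric_line a' b' c'"
    by auto
  show "\<bar>a*b' - a'*b\<bar> = 1"
  proof (rule ccontr)
    assume "\<bar>a*b' - a'*b\<bar> \<noteq> 1"
    then obtain y y' where "y \<noteq> y'" "y \<in> torus" "y' \<in> torus"
        "character a b y = cis (2*pi*c)" "character a' b' y = cis (2*pi*c')"
        "character a b y' = cis (2*pi*c)" "character a' b' y' = cis (2*pi*c')"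
      using character_values_attained_twice[OF assms(1,3)] by blast
    thus False
      using meet assms(4) by blast
  qed
qed

lemma coprime_proportional:
  fixes a b a' b' :: int
  assumes "coprime a b" "coprime a' b'" "a*b' = a'*b"
  shows "(a' = a \<and> b' = b) \<or> (a' = -a \<and> b' = -b)"
proof -
  have "a dvd a' * b" "a' dvd a * b'" "b dvd a * b'" "b' dvd a' * b"
    using assms(3) by (metis dvd_triv_left dvd_triv_right)+
  hence "a dvd a'" "a' dvd a" "b dvd b'" "b' dvd b"
    using assms(1,2) by (simp_all add: coprime_dvd_mult_left_iff coprime_dvd_mult_right_iff coprime_commute)
  hence abs_eq: "\<bar>a\<bar> = \<bar>a'\<bar>" "\<bar>b\<bar> = \<bar>b'\<bar>"
    by (metis zdvd_antisym_abs)+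
  show ?thesis
  proof (cases "a = 0")
    case True
    thus ?thesis
      using abs_eq by arith
  next
    case False
    have "a' = a \<or> a' = -a"
      using abs_eq(1) by arith
    thus ?thesis
      using assms(3) False by (auto simp flip: mult_minus_right)
  qed
qed

lemma parallel_lines_through_point_eq:
  assumes "coprime a b" "coprime a' b'" "a*b' = a'*b"
    and "v \<in> toric_line a b c" "v \<in> toric_line a' b' c'"
  shows "toric_line a b c = toric_line a' b' c'"
proof -
  have v: "v \<in> torus"
    using assms(4) toric_line_subset_torus by blast
  have L: "toric_line a b c = {z\<in>torus. character a b z = character a b v}"
    and L': "toric_line a' b' c' = {z\<in>torus. character a' b' z = character a' b' v}"
    using assms(4,5) by (auto simp: toric_line_level_set[OF assms(1)] toric_line_level_set[OF assms(2)])
  from coprime_proportional[OF assms(1-3)] show ?thesis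
  proof
    assume "a' = a \<and> b' = b"
    thus ?thesis
      using L L' by simp
  next
    assume "a' = -a \<and> b' = -b"
    hence "character a' b' z = character a' b' v \<longleftrightarrow> character a b z = character a b v"
      if "z \<in> torus" for z
      using character_uminus[OF that] character_uminus[OF v] by simp
    thus ?thesis
      using L L' by auto
  qed
qed

lemma parallel_to_two_nonparallel:
  fixes a1 b1 a2 b2 a3 b3 :: "'a::idom"
  assumes "a1*b2 - a2*b1 \<noteq> 0" "a1*b3 = a3*b1" "a2*b3 = a3*b2"
  shows "a3 = 0 \<and> b3 = 0"
proof -
  have "a3 * (a1*b2 - a2*b1) = 0" "b3 * (a1*b2 - a2*b1) = 0"
    using assms(2,3) by algebra+
  thus ?thesis
    using assms(1) by simp
qed

(* A parallel pair is
   excluded because the third line would force both to pass through v, making them equal. *)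
lemma three_lines_one_vertex:
  assumes cp: "coprime a1 b1" "coprime a2 b2" "coprime a3 b3"
    and d12: "a1*b2 - a2*b1 \<noteq> 0"
    and L1: "L1 = toric_line a1 b1 c1" and L2: "L2 = toric_line a2 b2 c2"
    and L3: "L3 = toric_line a3 b3 c3"
    and distinct: "L1 \<noteq> L3" "L2 \<noteq> L3"
    and meet: "L1 \<inter> L2 \<subseteq> {v}" "L1 \<inter> L3 \<subseteq> {v}" "L2 \<inter> L3 \<subseteq> {v}"
  shows "v \<in> L1 \<and> v \<in> L2 \<and> v \<in> L3 \<and>
         \<bar>a1*b2 - a2*b1\<bar> = 1 \<and> \<bar>a1*b3 - a3*b1\<bar> = 1 \<and> \<bar>a2*b3 - a3*b2\<bar> = 1"
proof -
  have v12: "v \<in> L1" "v \<in> L2" "\<bar>a1*b2 - a2*b1\<bar> = 1"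
    using lines_meeting_at_most_once[OF cp(1,2) d12] meet(1) unfolding L1 L2 by auto
  have d13: "a1*b3 - a3*b1 \<noteq> 0"
  proof
    assume par: "a1*b3 - a3*b1 = 0"
    hence "a2*b3 - a3*b2 \<noteq> 0"
      using parallel_to_two_nonparallel[OF d12] cp(3) by fastforce
    hence "v \<in> L3"
      using lines_meeting_at_most_once[OF cp(2,3)] meet(3) unfolding L2 L3 by auto
    hence "L1 = L3"
      using parallel_lines_through_point_eq[OF cp(1,3)] par v12 unfolding L1 L3 by auto
    thus False
      using distinct by simp
  qed
  have d23: "a2*b3 - a3*b2 \<noteq> 0"
  proof
    assume par: "a2*b3 - a3*b2 = 0"
    have "v \<in> L3"
      using lines_meeting_at_most_once[OF cp(1,3) d13] meet(2) unfolding L1 L3 by auto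
    hence "L2 = L3"
      using parallel_lines_through_point_eq[OF cp(2,3)] par v12 unfolding L2 L3 by auto
    thus False
      using distinct by simp
  qed
  show ?thesis
    using v12 lines_meeting_at_most_once[OF cp(1,3) d13] lines_meeting_at_most_once[OF cp(2,3) d23]
      meet unfolding L1 L2 L3 by auto
qed

lemma unimodular_triple_combination:
  fixes a1 b1 a2 b2 a3 b3 :: int
  assumes "\<bar>a1*b2 - a2*b1\<bar> = 1" "\<bar>a1*b3 - a3*b1\<bar> = 1" "\<bar>a2*b3 - a3*b2\<bar> = 1"
  shows "\<exists>m n. \<bar>m\<bar> = 1 \<and> \<bar>n\<bar> = 1 \<and> a3 = m*a1 + n*a2 \<and> b3 = m*b1 + n*b2"
proof -
  define D where "D = a1*b2 - a2*b1"
  define m where "m = -(a2*b3 - a3*b2) * D"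
  define n where "n = (a1*b3 - a3*b1) * D"
  have DD: "D*D = 1"
    using assms(1) unfolding D_def by (metis abs_mult_self_eq mult_1)
  have "m*a1 + n*a2 = (D*D)*a3" "m*b1 + n*b2 = (D*D)*b3"
    unfolding m_def n_def D_def by algebra+
  moreover have "\<bar>m\<bar> = 1" "\<bar>n\<bar> = 1"
    using assms unfolding m_def n_def D_def by (simp_all add: abs_mult)
  ultimately show ?thesis
    using DD by auto
qed

(* The position of a point w \<noteq> 1 on the unit circle, measured in full turns in (0,1). *)
definition turns :: "complex \<Rightarrow> real" where
  "turns w = (Arg (-w) + pi) / (2*pi)"

(* A unit number other than 1 is not a nonnegative real, so Arg is continuous at its negative. *)
lemma unit_ne_1_not_nonneg: "cmod w = 1 \<Longrightarrow> w \<noteq> 1 \<Longrightarrow> w \<notin> \<real>\<^sub>\<ge>\<^sub>0"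
  by (auto simp: complex_nonneg_Reals_iff complex_eq_iff cmod_eq_Re)

lemma turns_props:
  assumes "cmod w = 1" "w \<noteq> 1"
  shows "0 < turns w" "turns w < 1" "cis (2*pi*turns w) = w"
proof -
  have "Arg (-w) \<noteq> pi"
    using unit_ne_1_not_nonneg[OF assms] by (auto simp: Arg_eq_pi complex_nonneg_Reals_iff)
  hence "-pi < Arg (-w)" "Arg (-w) < pi"
    using mpi_less_Arg Arg_le_pi less_eq_real_def by blast+
  thus "0 < turns w" "turns w < 1"
    unfolding turns_def by (simp_all add: field_simps)
  have "cis (2*pi*turns w) = cis (Arg (-w) + pi)"
    unfolding turns_def by simp
  also have "\<dots> = cis (Arg (-w)) * cis pi"
    by (rule cis_mult[symmetric])
  also have "\<dots> = w"
    using assms(1) by (simp add: cis_Arg_unit)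
  finally show "cis (2*pi*turns w) = w" .
qed

lemma turns_cis: "0 < x \<Longrightarrow> x < 1 \<Longrightarrow> turns (cis (2*pi*x)) = x"
proof -
  assume "0 < x" "x < 1"
  hence "Arg (cis (2*pi*x - pi)) = 2*pi*x - pi"
    by (intro Arg_cis) (auto simp: algebra_simps)
  moreover have "- cis (2*pi*x) = cis (2*pi*x - pi)"
    by (simp add: cis_divide[symmetric])
  ultimately show ?thesis
    unfolding turns_def by simp
qed

lemma continuous_on_turns:
  assumes "continuous_on S f" "\<And>z. z \<in> S \<Longrightarrow> cmod (f z) = 1 \<and> f z \<noteq> 1"
  shows "continuous_on S (\<lambda>z. turns (f z))"
  unfolding turns_def using assms unit_ne_1_not_nonneg
  by (intro continuous_intros) auto

lemma floor_constant_on_connected: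
  fixes f :: "'a::topological_space \<Rightarrow> real"
  assumes "connected S" "continuous_on S f" "\<And>z. z \<in> S \<Longrightarrow> f z \<notin> \<int>"
    and "x \<in> S" "y \<in> S"
  shows "\<lfloor>f x\<rfloor> = \<lfloor>f y\<rfloor>"
proof -
  have interval: "t \<in> f ` S" if "u \<in> S" "w \<in> S" "f u \<le> t" "t \<le> f w" for u w t
    using connected_continuous_image[OF assms(2,1)] that unfolding connected_iff_interval by blast
  have no_jump: "\<not> \<lfloor>f u\<rfloor> < \<lfloor>f w\<rfloor>" if u: "u \<in> S" and w: "w \<in> S" for u w
  proof
    assume "\<lfloor>f u\<rfloor> < \<lfloor>f w\<rfloor>"
    hence "f u \<le> of_int \<lfloor>f w\<rfloor>" "of_int \<lfloor>f w\<rfloor> \<le> f w"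
      by linarith+
    hence "of_int \<lfloor>f w\<rfloor> \<in> f ` S"
      by (rule interval[OF u w])
    thus False
      using assms(3) by (metis Ints_of_int imageE)
  qed
  show ?thesis
    using no_jump[of x y] no_jump[of y x] assms(4,5) by linarith
qed

lemma card_components_floor_levels:
  fixes f :: "'a::topological_space \<Rightarrow> real"
  assumes cont: "continuous_on S f" and nonint: "\<And>z. z \<in> S \<Longrightarrow> f z \<notin> \<int>"
    and levels: "\<And>j. connected {z\<in>S. \<lfloor>f z\<rfloor> = j}"
  shows "card (components S) = card ((\<lambda>z. \<lfloor>f z\<rfloor>) ` S)"
proof -
  define level where "level j = {z\<in>S. \<lfloor>f z\<rfloor> = j}" for j
  have component: "connected_component_set S x = level \<lfloor>f x\<rfloor>" if "x \<in> S" for x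
  proof
    show "connected_component_set S x \<subseteq> level \<lfloor>f x\<rfloor>"
      using floor_constant_on_connected[OF connected_connected_component
            continuous_on_subset[OF cont connected_component_subset]] nonint
            connected_component_subset connected_component_refl[OF that]
      unfolding level_def by blast
    show "level \<lfloor>f x\<rfloor> \<subseteq> connected_component_set S x"
      using connected_component_maximal[of x "level \<lfloor>f x\<rfloor>" S] levels that
      unfolding level_def by auto
  qed
  have "components S = level ` (\<lambda>z. \<lfloor>f z\<rfloor>) ` S"
    unfolding components_def using component by (auto simp: image_image)
  moreover have "inj_on level ((\<lambda>z. \<lfloor>f z\<rfloor>) ` S)"
    by (rule inj_onI) (auto simp: level_def)
  ultimately show ?thesis
    by (simp add: card_image)
qed

(* The angles used to separate the complement of three concurrent lines: for signs m, n, s the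
   turns t1 = 1/2 + s m/4, t2 = 1/2 + s n/4 lie in (0,1) and m t1 + n t2 = (m+n+s)/2 is a half-integer. *)
lemma half_turn_choice:
  fixes m n s :: int
  assumes "\<bar>m\<bar> = 1" "\<bar>n\<bar> = 1" "\<bar>s\<bar> = 1"
  shows "0 < 1/2 + of_int (s*m) / (4::real)" "1/2 + of_int (s*m) / (4::real) < 1"
    "0 < 1/2 + of_int (s*n) / (4::real)" "1/2 + of_int (s*n) / (4::real) < 1"
    "of_int m * (1/2 + of_int (s*m) / 4) + of_int n * (1/2 + of_int (s*n) / 4) = of_int (m + n + s) / (2::real)"
    "of_int (m + n + s) / (2::real) \<notin> \<int>"
proof -
  have "\<bar>s*m\<bar> = 1" "\<bar>s*n\<bar> = 1"
    using assms by (simp_all add: abs_mult)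
  hence "s*m = 1 \<or> s*m = -1" "s*n = 1 \<or> s*n = -1"
    by arith+
  thus "0 < 1/2 + of_int (s*m) / (4::real)" "1/2 + of_int (s*m) / (4::real) < 1"
    "0 < 1/2 + of_int (s*n) / (4::real)" "1/2 + of_int (s*n) / (4::real) < 1"
    by (auto simp del: of_int_mult)
  have "m * m = 1" "n * n = 1"
    using assms by (metis abs_mult_self_eq mult_1)+
  hence mm: "real_of_int m * of_int m = 1" "real_of_int n * of_int n = 1"
    by (metis of_int_1 of_int_mult)+
  have "of_int m * (1/2 + of_int (s*m) / 4) + of_int n * (1/2 + of_int (s*n) / 4)
      = (of_int m + of_int n) / 2 + of_int s * (of_int m * of_int m + of_int n * of_int n) / (4::real)"
    by (simp add: field_simps)
  also have "\<dots> = of_int (m + n + s) / 2"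
    using mm by (simp add: field_simps)
  finally show "of_int m * (1/2 + of_int (s*m) / 4) + of_int n * (1/2 + of_int (s*n) / 4)
      = of_int (m + n + s) / (2::real)" .
  have "odd (m + n + s)"
  proof -
    have "m = 1 \<or> m = -1" "n = 1 \<or> n = -1" "s = 1 \<or> s = -1"
      using assms by arith+
    thus ?thesis
      by auto
  qed
  show "of_int (m + n + s) / (2::real) \<notin> \<int>"
  proof
    assume "of_int (m + n + s) / (2::real) \<in> \<int>"
    then obtain k where "of_int (m + n + s) / (2::real) = of_int k"
      by (rule Ints_cases)
    hence "of_int (m + n + s) = (of_int (2*k) :: real)"
      by (simp only: divide_eq_eq of_int_mult)
    hence "m + n + s = 2*k"
      by (simp only: of_int_eq_iff)
    thus False
      using \<open>odd (m + n + s)\<close> by simp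
  qed
qed

(* Lifting \<beta>1, \<beta>2 to turns gives G = m turns(\<beta>1) + n turns(\<beta>2) with cis(2 pi G) = \<beta>3, so G has no
   integer values off the lines, while it takes the values (m+n+1)/2 and (m+n-1)/2. *)
lemma unimodular_circle_maps_disconnect:
  fixes \<beta>1 \<beta>2 \<beta>3 :: "'a::topological_space \<Rightarrow> complex" and m n :: int
  assumes cont: "continuous_on T \<beta>1" "continuous_on T \<beta>2"
    and unit: "\<And>z. z \<in> T \<Longrightarrow> cmod (\<beta>1 z) = 1 \<and> cmod (\<beta>2 z) = 1"
    and third: "\<And>z. z \<in> T \<Longrightarrow> \<beta>3 z = \<beta>1 z powi m * \<beta>2 z powi n"
    and mn: "\<bar>m\<bar> = 1" "\<bar>n\<bar> = 1"
    and onto: "\<And>t1 t2. \<exists>z\<in>T. \<beta>1 z = cis (2*pi*t1) \<and> \<beta>2 z = cis (2*pi*t2)"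
  shows "\<not> connected {z\<in>T. \<beta>1 z \<noteq> 1 \<and> \<beta>2 z \<noteq> 1 \<and> \<beta>3 z \<noteq> 1}"
proof
  define S where "S = {z\<in>T. \<beta>1 z \<noteq> 1 \<and> \<beta>2 z \<noteq> 1 \<and> \<beta>3 z \<noteq> 1}"
  assume "connected {z\<in>T. \<beta>1 z \<noteq> 1 \<and> \<beta>2 z \<noteq> 1 \<and> \<beta>3 z \<noteq> 1}"
  hence conn: "connected S"
    unfolding S_def .
  define G where "G z = of_int m * turns (\<beta>1 z) + of_int n * turns (\<beta>2 z)" for z
  have cis_G: "cis (2*pi*G z) = \<beta>3 z" if "z \<in> T" "\<beta>1 z \<noteq> 1" "\<beta>2 z \<noteq> 1" for z
    using unit[OF that(1)] that by (simp add: G_def cis_lin_comb turns_props third)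
  have on_S_iff: "z \<in> S \<longleftrightarrow> G z \<notin> \<int>" if "z \<in> T" "\<beta>1 z \<noteq> 1" "\<beta>2 z \<noteq> 1" for z
    using cis_G[OF that] cis_2pi_eq_iff[of "G z" 0] that unfolding S_def by auto
  have cont_G: "continuous_on S G"
    unfolding G_def[abs_def] S_def
    by (intro continuous_intros continuous_on_turns continuous_on_subset[OF cont(1)]
              continuous_on_subset[OF cont(2)]) (auto simp: unit)
  have attained: "\<exists>z\<in>S. G z = of_int (m + n + s) / 2" if s: "\<bar>s\<bar> = 1" for s :: int
  proof -
    note t = half_turn_choice[OF mn s]
    obtain z where z: "z \<in> T" "\<beta>1 z = cis (2*pi*(1/2 + of_int (s*m) / 4))"
        "\<beta>2 z = cis (2*pi*(1/2 + of_int (s*n) / 4))"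
      using onto by blast
    have ne: "\<beta>1 z \<noteq> 1" "\<beta>2 z \<noteq> 1"
      using z t cis_2pi_ne_1 by simp_all
    have G: "G z = of_int (m + n + s) / 2"
      using z t by (simp add: G_def turns_cis)
    hence "z \<in> S"
      using on_S_iff[OF z(1) ne] t(6) by (simp only: not_False_eq_True)
    thus ?thesis
      using G by blast
  qed
  obtain z1 z2 where z: "z1 \<in> S" "z2 \<in> S"
      "G z1 = of_int (m + n + 1) / 2" "G z2 = of_int (m + n + (-1)) / 2"
    using attained[of 1] attained[of "-1"] by auto
  hence "G z1 = G z2 + 1"
    by (simp add: field_simps)
  have "\<lfloor>G z1\<rfloor> = \<lfloor>G z2\<rfloor>"
    by (rule floor_constant_on_connected[OF conn cont_G _ z(1,2)]) (use on_S_iff S_def in blast)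
  thus False
    using \<open>G z1 = G z2 + 1\<close> by simp
qed

(* Three lines through a common point v with pairwise unimodular types disconnect the torus:
   normalising the characters by their values at v puts us in the model situation above. *)
lemma concurrent_unimodular_lines_disconnect:
  assumes cp: "coprime a1 b1" "coprime a2 b2" "coprime a3 b3"
    and d: "\<bar>a1*b2 - a2*b1\<bar> = 1" "\<bar>a1*b3 - a3*b1\<bar> = 1" "\<bar>a2*b3 - a3*b2\<bar> = 1"
    and v: "v \<in> toric_line a1 b1 c1" "v \<in> toric_line a2 b2 c2" "v \<in> toric_line a3 b3 c3"
  shows "\<not> connected (torus - (toric_line a1 b1 c1 \<union> toric_line a2 b2 c2 \<union> toric_line a3 b3 c3))"
proof -
  obtain m n where mn: "\<bar>m\<bar> = 1" "\<bar>n\<bar> = 1" "a3 = m*a1 + n*a2" "b3 = m*b1 + n*b2"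
    using unimodular_triple_combination[OF d] by blast
  have v_torus: "v \<in> torus"
    using v(1) toric_line_subset_torus by blast
  have v_nonzero: "character a b v \<noteq> 0" for a b
    using norm_character[OF v_torus, of a b] by auto
  define \<beta> where "\<beta> a b z = character a b z / character a b v" for a b z
  have v_value: "character a b v = cis (2*pi*c)" if "coprime a b" "v \<in> toric_line a b c" for a b c
    using that by (simp add: toric_line_level_set)
  have line: "toric_line a b c = {z\<in>torus. \<beta> a b z = 1}"
    if "coprime a b" "v \<in> toric_line a b c" for a b c
    using v_value[OF that] by (simp add: toric_line_level_set[OF that(1)] \<beta>_def)
  have "\<not> connected {z\<in>torus. \<beta> a1 b1 z \<noteq> 1 \<and> \<beta> a2 b2 z \<noteq> 1 \<and> \<beta> a3 b3 z \<noteq> 1}"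
  proof (rule unimodular_circle_maps_disconnect[OF _ _ _ _ mn(1,2)])
    show "continuous_on torus (\<beta> a1 b1)" "continuous_on torus (\<beta> a2 b2)"
      unfolding \<beta>_def[abs_def]
      by (auto intro!: continuous_intros continuous_on_character simp: v_nonzero)
    show "cmod (\<beta> a1 b1 z) = 1 \<and> cmod (\<beta> a2 b2 z) = 1" if "z \<in> torus" for z
      using that v_torus by (simp add: \<beta>_def norm_divide norm_character)
    show "\<beta> a3 b3 z = \<beta> a1 b1 z powi m * \<beta> a2 b2 z powi n" if "z \<in> torus" for z
      unfolding \<beta>_def mn(3,4) character_lin_comb[OF that] character_lin_comb[OF v_torus]
      by (simp add: power_int_divide_distrib)
    show "\<exists>z\<in>torus. \<beta> a1 b1 z = cis (2*pi*t1) \<and> \<beta> a2 b2 z = cis (2*pi*t2)" for t1 t2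
    proof -
      have "a1*b2 - a2*b1 \<noteq> 0"
        using d(1) by auto
      then obtain z where z: "z \<in> torus" "character a1 b1 z = cis (2*pi*(c1 + t1))"
          "character a2 b2 z = cis (2*pi*(c2 + t2))"
        using character_values_attained by blast
      have "\<beta> a1 b1 z = cis (2*pi*t1)" "\<beta> a2 b2 z = cis (2*pi*t2)"
        using z(2,3) v_value[OF cp(1) v(1)] v_value[OF cp(2) v(2)]
        by (simp_all add: \<beta>_def distrib_left cis_mult[symmetric])
      thus ?thesis
        using z(1) by blast
    qed
  qed
  moreover have "torus - (toric_line a1 b1 c1 \<union> toric_line a2 b2 c2 \<union> toric_line a3 b3 c3)
      = {z\<in>torus. \<beta> a1 b1 z \<noteq> 1 \<and> \<beta> a2 b2 z \<noteq> 1 \<and> \<beta> a3 b3 z \<noteq> 1}"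
    using line[OF cp(1) v(1)] line[OF cp(2) v(2)] line[OF cp(3) v(3)] by auto
  ultimately show ?thesis
    by simp
qed

lemma single_vertex_arrangement_disconnects:
  assumes arr: "toric_arrangement A" and three: "card A = 3" and vertex: "arr_vertices A = {v}"
  shows "\<not> connected (torus - \<Union>A)"
proof -
  obtain a1 b1 c1 a2 b2 c2 where cp: "coprime a1 b1" "coprime a2 b2"
      and in_A: "toric_line a1 b1 c1 \<in> A" "toric_line a2 b2 c2 \<in> A" and d12: "a1*b2 - a2*b1 \<noteq> 0"
    using arr unfolding toric_arrangement_def by auto
  define L1 L2 where "L1 = toric_line a1 b1 c1" and "L2 = toric_line a2 b2 c2"
  have "L1 \<noteq> L2"
    unfolding L1_def L2_def by (rule nonparallel_lines_differ[OF cp d12])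
  hence "card (A - {L1, L2}) = 1"
    using three in_A arr by (simp add: L1_def L2_def toric_arrangement_def card_Diff_subset)
  then obtain L3 where "A - {L1, L2} = {L3}"
    by (rule card_1_singletonE)
  hence A: "A = {L1, L2, L3}" and distinct: "L1 \<noteq> L3" "L2 \<noteq> L3"
    using in_A unfolding L1_def L2_def by auto
  obtain a3 b3 c3 where cp3: "coprime a3 b3" and L3: "L3 = toric_line a3 b3 c3"
    using arr A unfolding toric_arrangement_def is_toric_line_def by auto
  have "X \<subseteq> torus" if "X \<in> A" for X
    using that toric_line_subset_torus unfolding A L1_def L2_def L3 by auto
  hence meet: "X \<inter> Y \<subseteq> {v}" if "X \<in> A" "Y \<in> A" "X \<noteq> Y" for X Y
    using that vertex unfolding arr_vertices_def by blast
  have "L1 \<inter> L2 \<subseteq> {v}" "L1 \<inter> L3 \<subseteq> {v}" "L2 \<inter> L3 \<subseteq> {v}"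
    using meet A distinct \<open>L1 \<noteq> L2\<close> by auto
  from three_lines_one_vertex[OF cp cp3 d12 L1_def L2_def L3 distinct this]
  have "\<not> connected (torus - (L1 \<union> L2 \<union> L3))"
    unfolding L1_def L2_def L3 by (intro concurrent_unimodular_lines_disconnect[OF cp cp3]) auto
  moreover have "\<Union>A = L1 \<union> L2 \<union> L3"
    using A by auto
  ultimately show ?thesis
    by simp
qed

definition staircase :: "nat \<Rightarrow> (complex \<times> complex) set set" where
  "staircase k = {toric_line 0 1 0, toric_line 1 0 0, toric_line 1 (int k) (1/2)}"

lemma staircase_lines:
  "toric_line 0 1 0 = {z\<in>torus. snd z = 1}"
  "toric_line 1 0 0 = {z\<in>torus. fst z = 1}"
  "toric_line 1 (int k) (1/2) = {z\<in>torus. fst z * snd z ^ k = -1}"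
  by (simp_all add: toric_line_level_set character_def)

lemma staircase_lines_distinct:
  "toric_line 0 1 0 \<noteq> toric_line 1 0 0" "toric_line 0 1 0 \<noteq> toric_line 1 (int k) (1/2)"
  "toric_line 1 0 0 \<noteq> toric_line 1 (int k) (1/2)"
proof -
  have "(1, 1) \<in> torus" "(-1, 1) \<in> torus"
    by (simp_all add: torus_iff)
  hence "(-1, 1) \<in> toric_line 0 1 0" "(-1, 1) \<notin> toric_line 1 0 0"
        "(1, 1) \<in> toric_line 0 1 0" "(1, 1) \<in> toric_line 1 0 0" "(1, 1) \<notin> toric_line 1 (int k) (1/2)"
    unfolding staircase_lines by simp_all
  thus "toric_line 0 1 0 \<noteq> toric_line 1 0 0" "toric_line 0 1 0 \<noteq> toric_line 1 (int k) (1/2)"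
       "toric_line 1 0 0 \<noteq> toric_line 1 (int k) (1/2)"
    by metis+
qed

lemma staircase_arrangement: "toric_arrangement (staircase k)" "card (staircase k) = 3"
proof -
  have cp: "coprime (0::int) 1" "coprime (1::int) 0" "coprime (1::int) (int k)"
    by simp_all
  have "\<forall>L\<in>staircase k. is_toric_line L"
    unfolding staircase_def is_toric_line_def using cp by blast
  moreover have "coprime (0::int) 1 \<and> coprime (1::int) 0 \<and> toric_line 0 1 0 \<in> staircase k \<and>
      toric_line 1 0 0 \<in> staircase k \<and> (0::int) * 0 \<noteq> 1 * 1"
    by (simp add: staircase_def)
  ultimately show "toric_arrangement (staircase k)"
    unfolding toric_arrangement_def staircase_def by blast
  show "card (staircase k) = 3"
    unfolding staircase_def using staircase_lines_distinct by simp
qed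

lemma staircase_vertices:
  "arr_vertices (staircase k) = {(1, 1), (-1, 1)} \<union> Pair 1 ` {\<zeta>. \<zeta> ^ k = -1}"
proof -
  have root_unit: "cmod \<zeta> = 1" if "\<zeta> ^ k = -1" for \<zeta> :: complex
  proof -
    have "k > 0"
      using that by (cases k) auto
    moreover have "cmod \<zeta> ^ k = 1 ^ k"
      using that by (simp flip: norm_power)
    ultimately show ?thesis
      using power_eq_imp_eq_base[of "cmod \<zeta>" k 1] by simp
  qed
  have pairs: "(\<exists>X\<in>{A, B, C}. \<exists>Y\<in>{A, B, C}. X \<noteq> Y \<and> p \<in> X \<and> p \<in> Y) \<longleftrightarrow>
      (p \<in> A \<and> p \<in> B) \<or> (p \<in> A \<and> p \<in> C) \<or> (p \<in> B \<and> p \<in> C)"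
    if "A \<noteq> B" "A \<noteq> C" "B \<noteq> C" for A B C :: "'x set" and p
    using that by auto
  have "arr_vertices (staircase k) = {p\<in>torus.
      (p \<in> toric_line 0 1 0 \<and> p \<in> toric_line 1 0 0) \<or>
      (p \<in> toric_line 0 1 0 \<and> p \<in> toric_line 1 (int k) (1/2)) \<or>
      (p \<in> toric_line 1 0 0 \<and> p \<in> toric_line 1 (int k) (1/2))}"
    unfolding arr_vertices_def staircase_def using pairs[OF staircase_lines_distinct] by simp
  also have "\<dots> = {p\<in>torus. (snd p = 1 \<and> fst p = 1) \<or>
      (snd p = 1 \<and> fst p * snd p ^ k = -1) \<or> (fst p = 1 \<and> fst p * snd p ^ k = -1)}"
    unfolding staircase_lines by blast
  also have "\<dots> = {(1, 1), (-1, 1)} \<union> Pair 1 ` {\<zeta>. \<zeta> ^ k = -1}"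
    by (auto simp: torus_iff root_unit)
  finally show ?thesis .
qed

lemma card_staircase_vertices: "card (arr_vertices (staircase k)) = k + 2"
proof -
  have "finite {\<zeta>::complex. \<zeta> ^ k = -1}" "card {\<zeta>::complex. \<zeta> ^ k = -1} = k"
    by (cases "k = 0"; simp add: finite_nth_roots card_nth_roots)+
  moreover have "inj (Pair (1::complex))"
    by (simp add: inj_def)
  ultimately show ?thesis
    unfolding staircase_vertices
    by (subst card_Un_disjoint) (auto simp: card_image inj_on_def)
qed

(* On the complement of the staircase, the height x + k y + 1/2 (read off in the fundamental
   square (0,1)^2) is never an integer; its integer part numbers the chambers. *)
definition staircase_complement :: "nat \<Rightarrow> (complex \<times> complex) set" where
  "staircase_complement k = torus - \<Union>(staircase k)"

definition staircase_height :: "nat \<Rightarrow> complex \<times> complex \<Rightarrow> real" where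
  "staircase_height k z = turns (fst z) + real k * turns (snd z) + 1/2"

definition staircase_region :: "nat \<Rightarrow> int \<Rightarrow> (real \<times> real) set" where
  "staircase_region k j = {p. 0 < fst p \<and> fst p < 1 \<and> 0 < snd p \<and> snd p < 1 \<and>
     of_int j < fst p + real k * snd p + 1/2 \<and> fst p + real k * snd p + 1/2 < of_int j + 1}"

lemma not_Ints_between:
  fixes x :: real
  assumes "of_int j < x" "x < of_int j + 1"
  shows "x \<notin> \<int>"
proof
  assume "x \<in> \<int>"
  then obtain m where "x = of_int m"
    by (rule Ints_cases)
  hence "j < m" "m < j + 1"
    using assms by simp_all
  thus False
    by linarith
qed

lemma staircase_character:
  assumes "z \<in> torus" "fst z \<noteq> 1" "snd z \<noteq> 1"
  shows "fst z * snd z ^ k = cis (2*pi*(staircase_height k z - 1/2))"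
proof -
  have "staircase_height k z - 1/2 = of_int 1 * turns (fst z) + of_int (int k) * turns (snd z)"
    by (simp add: staircase_height_def)
  hence "cis (2*pi*(staircase_height k z - 1/2))
      = cis (2*pi*turns (fst z)) powi 1 * cis (2*pi*turns (snd z)) powi (int k)"
    by (simp only: cis_lin_comb)
  also have "\<dots> = fst z * snd z ^ k"
    using assms by (simp add: turns_props torus_iff)
  finally show ?thesis ..
qed

lemma mem_staircase_complement:
  "z \<in> staircase_complement k \<longleftrightarrow>
     z \<in> torus \<and> fst z \<noteq> 1 \<and> snd z \<noteq> 1 \<and> staircase_height k z \<notin> \<int>"
proof -
  have "fst z * snd z ^ k = -1 \<longleftrightarrow> staircase_height k z \<in> \<int>"
    if "z \<in> torus" "fst z \<noteq> 1" "snd z \<noteq> 1"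
  proof -
    have "fst z * snd z ^ k = -1 \<longleftrightarrow> staircase_height k z - 1/2 - 1/2 \<in> \<int>"
      using cis_2pi_eq_iff[of "staircase_height k z - 1/2" "1/2"]
      by (simp add: staircase_character[OF that])
    thus ?thesis
      by (simp add: diff_diff_eq del: Ints_diff)
  qed
  thus ?thesis
    unfolding staircase_complement_def staircase_def staircase_lines by auto
qed

lemma staircase_height_torus_map:
  assumes "0 < x" "x < 1" "0 < y" "y < 1"
  shows "staircase_height k (torus_map (x, y)) = x + real k * y + 1/2"
  unfolding staircase_height_def torus_map_def fst_conv snd_conv
            turns_cis[OF assms(1,2)] turns_cis[OF assms(3,4)] ..

lemma continuous_on_staircase_height: "continuous_on (staircase_complement k) (staircase_height k)"
proof -
  have "continuous_on (staircase_complement k) (\<lambda>z. turns (fst z))"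
       "continuous_on (staircase_complement k) (\<lambda>z. turns (snd z))"
    by (intro continuous_on_turns continuous_on_fst continuous_on_snd continuous_on_id;
        simp add: mem_staircase_complement torus_iff)+
  thus ?thesis
    unfolding staircase_height_def[abs_def]
    by (intro continuous_on_add continuous_on_mult continuous_on_const)
qed

lemma staircase_level_set:
  "{z \<in> staircase_complement k. \<lfloor>staircase_height k z\<rfloor> = j} = torus_map ` staircase_region k j"
proof (intro equalityI subsetI)
  fix z assume "z \<in> {z \<in> staircase_complement k. \<lfloor>staircase_height k z\<rfloor> = j}"
  hence C: "cmod (fst z) = 1" "cmod (snd z) = 1" "fst z \<noteq> 1" "snd z \<noteq> 1"
      "staircase_height k z \<notin> \<int>" and j: "\<lfloor>staircase_height k z\<rfloor> = j"
    by (simp_all add: mem_staircase_complement torus_iff)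
  note t1 = turns_props[OF C(1,3)] and t2 = turns_props[OF C(2,4)]
  define p where "p = (turns (fst z), turns (snd z))"
  have "torus_map p = z"
    using t1(3) t2(3) by (simp add: p_def torus_map_def)
  moreover have "of_int j \<le> staircase_height k z" "staircase_height k z < of_int j + 1"
    using j by linarith+
  moreover have "of_int j \<noteq> staircase_height k z"
    using C(5) by (metis Ints_of_int)
  ultimately have "p \<in> staircase_region k j"
    using t1 t2 by (simp add: staircase_region_def staircase_height_def p_def less_le)
  thus "z \<in> torus_map ` staircase_region k j"
    using \<open>torus_map p = z\<close> by blast
next
  fix z assume "z \<in> torus_map ` staircase_region k j"
  then obtain x y where z: "z = torus_map (x, y)" and xy: "(x, y) \<in> staircase_region k j"
    by auto
  hence bounds: "0 < x" "x < 1" "0 < y" "y < 1"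
    by (simp_all add: staircase_region_def)
  have h: "of_int j < staircase_height k z" "staircase_height k z < of_int j + 1"
    using xy unfolding z staircase_height_torus_map[OF bounds] staircase_region_def by simp_all
  have "fst z \<noteq> 1" "snd z \<noteq> 1"
    using bounds cis_2pi_ne_1 by (simp_all add: z torus_map_def)
  moreover have "\<lfloor>staircase_height k z\<rfloor> = j"
    using h by linarith
  ultimately show "z \<in> {z \<in> staircase_complement k. \<lfloor>staircase_height k z\<rfloor> = j}"
    using not_Ints_between[OF h] by (simp add: mem_staircase_complement z torus_map_in_torus)
qed

lemma convex_halfplane: "convex {p :: real \<times> real. a * fst p + b * snd p < c}"
proof -
  have "{p :: real \<times> real. a * fst p + b * snd p < c} = {p. inner (a, b) p < c}"
    by (auto simp: inner_prod_def)
  thus ?thesis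
    by (simp add: convex_halfspace_lt)
qed

lemma convex_staircase_region: "convex (staircase_region k j)"
proof -
  have "staircase_region k j =
      {p. (-1) * fst p + 0 * snd p < 0} \<inter> {p. 1 * fst p + 0 * snd p < 1} \<inter>
      {p. 0 * fst p + (-1) * snd p < 0} \<inter> {p. 0 * fst p + 1 * snd p < 1} \<inter>
      {p. (-1) * fst p + (- real k) * snd p < 1/2 - of_int j} \<inter>
      {p. 1 * fst p + real k * snd p < of_int j + 1/2}"
    unfolding staircase_region_def by auto
  thus ?thesis
    by (simp only:) (intro convex_Int convex_halfplane)
qed

lemma staircase_region_witness:
  assumes "0 \<le> j" "j \<le> int k + 1"
  defines "w \<equiv> (4 * of_int j + 1) / (4 * real k + 6)"
  shows "(w, w) \<in> staircase_region k j"
proof -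
  have d: "0 < 4 * real k + 6"
    by simp
  have jr: "0 \<le> real_of_int j" "real_of_int j \<le> real k + 1"
    using assms(1,2) by simp_all
  have w01: "0 < w" "w < 1"
    using d jr by (simp_all add: w_def field_simps)
  have wD: "w * (4 * real k + 6) = 4 * of_int j + 1"
    using d by (simp add: w_def)
  have "(w + real k * w + 1/2 - of_int j) * (4 * real k + 6)
      = (real k + 1) * (w * (4 * real k + 6)) + (2 * real k + 3) - of_int j * (4 * real k + 6)"
    by (simp add: algebra_simps)
  also have "\<dots> = 3 * real k + 4 - 2 * of_int j"
    unfolding wD by (simp add: algebra_simps)
  finally have "(w + real k * w + 1/2 - of_int j) * (4 * real k + 6) = 3 * real k + 4 - 2 * of_int j" .
  moreover have "0 < 3 * real k + 4 - 2 * of_int j" "3 * real k + 4 - 2 * of_int j < 1 * (4 * real k + 6)"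
    using jr by simp_all
  ultimately have "0 < w + real k * w + 1/2 - of_int j" "w + real k * w + 1/2 - of_int j < 1"
    using d by (metis zero_less_mult_pos2, metis mult_less_cancel_right_pos)
  with w01 show ?thesis
    unfolding staircase_region_def by simp
qed

lemma staircase_height_floor_values:
  "(\<lambda>z. \<lfloor>staircase_height k z\<rfloor>) ` staircase_complement k = {0..int k + 1}"
proof (intro equalityI subsetI)
  fix j assume "j \<in> (\<lambda>z. \<lfloor>staircase_height k z\<rfloor>) ` staircase_complement k"
  then obtain z where z: "z \<in> staircase_complement k" and j: "j = \<lfloor>staircase_height k z\<rfloor>"
    by blast
  hence C: "cmod (fst z) = 1" "cmod (snd z) = 1" "fst z \<noteq> 1" "snd z \<noteq> 1"
    by (simp_all add: mem_staircase_complement torus_iff)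
  note t1 = turns_props[OF C(1,3)] and t2 = turns_props[OF C(2,4)]
  have "0 \<le> real k * turns (snd z)" "real k * turns (snd z) \<le> real k"
    using t2 by (simp_all add: mult_left_le)
  hence "0 \<le> staircase_height k z" "staircase_height k z < real k + 2"
    using t1 unfolding staircase_height_def by linarith+
  thus "j \<in> {0..int k + 1}"
    unfolding j by (simp add: floor_le_iff)
next
  fix j assume j: "j \<in> {0..int k + 1}"
  define w where "w = (4 * of_int j + 1) / (4 * real k + 6)"
  have "(w, w) \<in> staircase_region k j"
    unfolding w_def using j by (intro staircase_region_witness) simp_all
  hence "torus_map (w, w) \<in> {z \<in> staircase_complement k. \<lfloor>staircase_height k z\<rfloor> = j}"
    unfolding staircase_level_set by (rule imageI)
  hence "torus_map (w, w) \<in> staircase_complement k" "j = \<lfloor>staircase_height k (torus_map (w, w))\<rfloor>"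
    by simp_all
  thus "j \<in> (\<lambda>z. \<lfloor>staircase_height k z\<rfloor>) ` staircase_complement k"
    by (rule rev_image_eqI)
qed

lemma card_staircase_chambers: "card (arr_chambers (staircase k)) = k + 2"
proof -
  have "card (components (staircase_complement k)) =
        card ((\<lambda>z. \<lfloor>staircase_height k z\<rfloor>) ` staircase_complement k)"
  proof (rule card_components_floor_levels[OF continuous_on_staircase_height])
    show "staircase_height k z \<notin> \<int>" if "z \<in> staircase_complement k" for z
      using that by (simp add: mem_staircase_complement)
    show "connected {z \<in> staircase_complement k. \<lfloor>staircase_height k z\<rfloor> = j}" for j
      unfolding staircase_level_set
      by (rule connected_continuous_image[OF continuous_on_torus_map
                                             convex_connected[OF convex_staircase_region]])
  qed
  thus ?thesis
    unfolding arr_chambers_def staircase_complement_def[symmetric] staircase_height_floor_values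
    by simp
qed

theorem mainTheorem7:
  fixes f0 :: nat
  assumes "f0 > 0"
  shows "(\<exists>A. toric_arrangement A \<and> card A = 3 \<and> card (arr_vertices A) = f0 \<and>
             card (arr_chambers A) = f0) \<longleftrightarrow> f0 \<ge> 2"
proof
  assume "\<exists>A. toric_arrangement A \<and> card A = 3 \<and> card (arr_vertices A) = f0 \<and>
             card (arr_chambers A) = f0"
  then obtain A where A: "toric_arrangement A" "card A = 3"
      and counts: "card (arr_vertices A) = f0" "card (arr_chambers A) = f0"
    by blast
  show "f0 \<ge> 2"
  proof (rule ccontr)
    assume "\<not> f0 \<ge> 2"
    hence "card (arr_vertices A) = 1" "card (components (torus - \<Union>A)) = 1"
      using assms counts by (simp_all add: arr_chambers_def)
    then obtain v C where "arr_vertices A = {v}" "components (torus - \<Union>A) = {C}"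
      by (elim card_1_singletonE)
    thus False
      using single_vertex_arrangement_disconnects[OF A] components_eq_sing_exists by metis
  qed
next
  assume "f0 \<ge> 2"
  hence "f0 = (f0 - 2) + 2"
    by simp
  thus "\<exists>A. toric_arrangement A \<and> card A = 3 \<and> card (arr_vertices A) = f0 \<and>
            card (arr_chambers A) = f0"
    using staircase_arrangement card_staircase_vertices card_staircase_chambers by metis
qed

end
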